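(* Let $M$ and $D$ be $n\times n$ matrices with entries in $\mathbb{Z}_2$ such that $M$ is non-degenerate and $D$ is diagonal. Then $\operatorname{rk}(M+D)\ge \operatorname{rk}(M+I)/2$, where $I$ is the $n\times n$ identity matrix.
   Context: A matrix is diagonal if all its entries outside the main diagonal are $0$. Ranks are over $\mathbb{Z}_2$. *)

theory Defs
  imports "HOL-Analysis.Analysis" "HOL-Library.Z2"
begin

end

theory Submission
  imports Defs
begin

text \<open>Over \<open>\<int>\<^sub>2\<close> we have \<open>M = (M + D) + D\<close> and \<open>M + I = (M + D) + (D + I)\<close>, and the
  diagonal matrices \<open>D\<close> and \<open>D + I\<close> have complementary supports \<open>T\<close> and \<open>-T\<close>.
  Since adding a diagonal matrix raises the rank by at most the size of its support,
  \<open>n = rk M \<le> rk (M + D) + |T|\<close> and \<open>rk (M + I) \<le> rk (M + D) + n - |T|\<close>; adding the two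
  inequalities gives \<open>rk (M + I) \<le> 2 rk (M + D)\<close>.\<close>

lemma (in finite_dimensional_vector_space) dim_Un_le: "dim (S \<union> T) \<le> dim S + dim T"
proof -
  have "dim (S \<union> T) = dim {x + y |x y. x \<in> span S \<and> y \<in> span T}"
    by (metis dim_span span_Un)
  also have "\<dots> \<le> dim (span S) + dim (span T)"
    using dim_sums_Int[OF subspace_span[of S] subspace_span[of T]] by linarith
  finally show ?thesis by simp
qed

lemma row_add: "row i (A + B) = row i A + row i B"
  by (simp add: row_def vec_eq_iff)

lemma rank_add_le:
  fixes A B :: "'a::field ^ 'n ^ 'm"
  shows "rank (A + B) \<le> rank A + rank B"
proof -
  have "rows (A + B) \<subseteq> vec.span (rows A \<union> rows B)"
  proof
    fix r
    assume "r \<in> rows (A + B)"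
    then obtain i where "r = row i A + row i B"
      by (auto simp: rows_def row_add)
    moreover have "row i A \<in> rows A" "row i B \<in> rows B"
      by (auto simp: rows_def)
    ultimately show "r \<in> vec.span (rows A \<union> rows B)"
      by (simp add: vec.span_add vec.span_base)
  qed
  then have "rank (A + B) \<le> vec.dim (rows A \<union> rows B)"
    unfolding row_rank_def_gen by (rule vec.dim_mono)
  also have "\<dots> \<le> rank A + rank B"
    unfolding row_rank_def_gen by (rule vec.dim_Un_le)
  finally show ?thesis .
qed

lemma rank_diagonal_le:
  fixes D :: "'a::field ^ 'n ^ 'n"
  assumes "\<forall>i j. i \<noteq> j \<longrightarrow> D $ i $ j = 0"
  shows "rank D \<le> card {i. D $ i $ i \<noteq> 0}"
proof -
  let ?T = "{i. D $ i $ i \<noteq> 0}"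
  have "row i D = D $ i $ i *s axis i 1" for i
    using assms by (auto simp: row_def vec_eq_iff axis_def)
  then have "row i D \<in> vec.span ((\<lambda>i. axis i 1) ` ?T)" for i
    by (cases "D $ i $ i = 0") (simp_all add: vec.span_zero vec.span_scale vec.span_base)
  then have "rows D \<subseteq> vec.span ((\<lambda>i. axis i 1) ` ?T)"
    by (auto simp: rows_def)
  then have "rank D \<le> card ((\<lambda>i. axis i (1::'a)) ` ?T)"
    unfolding row_rank_def_gen by (rule vec.dim_le_card) simp
  also have "\<dots> \<le> card ?T"
    by (rule card_image_le) simp
  finally show ?thesis .
qed

lemma rank_add_diagonal_le:
  fixes A D :: "'a::field ^ 'n ^ 'n"
  assumes "\<forall>i j. i \<noteq> j \<longrightarrow> D $ i $ j = 0"
  shows "rank (A + D) \<le> rank A + card {i. D $ i $ i \<noteq> 0}"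
  using rank_add_le[of A D] rank_diagonal_le[OF assms] by linarith

lemma rank_invertible:
  fixes M :: "'a::field ^ 'n ^ 'n"
  assumes "invertible M"
  shows "rank M = CARD('n)"
proof -
  obtain N where "N ** M = mat 1"
    using assms unfolding invertible_def by blast
  then have "vec.span (rows M) = UNIV"
    using matrix_left_invertible_span_rows_gen by blast
  then show ?thesis
    unfolding row_rank_def_gen by (metis vec.dim_span vec_dim_card)
qed

lemma bit_add_one_eq_0_iff: "(x::bit) + 1 = 0 \<longleftrightarrow> x \<noteq> 0"
  by (cases x) simp_all

theorem mainTheorem5:
  fixes M D :: "bit ^ 'n ^ 'n"
  assumes "invertible M"
    and "\<forall>i j. i \<noteq> j \<longrightarrow> D $ i $ j = 0"
  shows "real (rank (M + D)) \<ge> real (rank (M + mat 1)) / 2"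
proof -
  let ?T = "{i. D $ i $ i \<noteq> 0}"
  have D_one_diagonal: "\<forall>i j. i \<noteq> j \<longrightarrow> (D + mat 1) $ i $ j = 0"
    using assms(2) by (simp add: mat_def)
  have support_D_one: "{i. (D + mat 1) $ i $ i \<noteq> 0} = - ?T"
    by (auto simp: mat_def bit_add_one_eq_0_iff)
  have "(M + D) + D = M"
    by (simp add: vec_eq_iff add.assoc)
  then have "CARD('n) = rank ((M + D) + D)"
    by (simp add: rank_invertible[OF assms(1)])
  also have "\<dots> \<le> rank (M + D) + card ?T"
    by (rule rank_add_diagonal_le[OF assms(2)])
  finally have M: "CARD('n) \<le> rank (M + D) + card ?T" .
  have "(M + D) + (D + mat 1) = M + mat 1"
    by (simp add: vec_eq_iff add.assoc)
  then have "rank (M + mat 1) = rank ((M + D) + (D + mat 1))"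
    by simp
  also have "\<dots> \<le> rank (M + D) + card {i. (D + mat 1) $ i $ i \<noteq> 0}"
    by (rule rank_add_diagonal_le[OF D_one_diagonal])
  finally have M_one: "rank (M + mat 1) \<le> rank (M + D) + card (- ?T)"
    unfolding support_D_one .
  have "card ?T + card (- ?T) = CARD('n)"
    using card_Un_disjoint[of ?T "- ?T"] by (simp add: Compl_partition)
  with M M_one show ?thesis by linarith
qed

end
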